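(* Let $Y_0$ and $Y_1$ be real-valued random variables on a common probability space, with marginal cumulative distribution functions $F_0$ and $F_1$, and let $Q_0(u)=\inf\{y\in\mathbb{R}: F_0(y)\geq u\}$ be the left-continuous generalized inverse of $F_0$. Let $U\sim U(0,1)$ be a random variable on the same space with $Y_0=Q_0(U)$ (the joint distribution of $(U,Y_1)$ is otherwise arbitrary). Then for every $0\leq a<b\leq 1$, \[ \sup_{x\in(a,b)}[x-a-F_1(Q_0(x))]_+\leq P(a<U<b,\ Y_0<Y_1)\leq b-a-\sup_{x\in(a,b)}[b-x-1+F_1(Q_0(x))]_+, \] \[ \sup_{x\in(a,b)}[b-x-1+F_1(Q_0(x)-)]_+\leq P(a<U<b,\ Y_0>Y_1)\leq b-a-\sup_{x\in(a,b)}[x-a-F_1(Q_0(x)-)]_+. \] Moreover, given the marginals ($U\sim U(0,1)$, $Y_0=Q_0(U)$, and $Y_1$ with cdf $F_1$): for each of the two lower bounds there exists a joint distribution of $(U,Y_1)$ for which that lower bound is attained (holds with equality), and for each of the two upper bounds and every $\varepsilon>0$ there exists a joint distribution of $(U,Y_1)$ for which the corresponding probability is within $\varepsilon$ of that upper bound. Finally, all four bounds, viewed as functions of $(a,b)$, are nonincreasing and Lipschitz in $a$ and nondecreasing and Lipschitz in $b$.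
   Context: For real $x$, $[x]_+=\max\{x,0\}$. For a cdf $F$, $F(y-)=\lim_{x\nearrow y}F(x)$ denotes its left limit at $y$. *)

theory Defs
  imports "HOL-Probability.Probability"
begin

definition pos_part :: "real \<Rightarrow> real" where
  "pos_part x = max x 0"

definition left_lim :: "(real \<Rightarrow> real) \<Rightarrow> real \<Rightarrow> real" where
  "left_lim F y = Lim (at_left y) F"

definition gen_inv :: "(real \<Rightarrow> real) \<Rightarrow> real \<Rightarrow> real" where
  "gen_inv F u = Inf {y. F y \<ge> u}"

definition lower_lt :: "(real \<Rightarrow> real) \<Rightarrow> (real \<Rightarrow> real) \<Rightarrow> real \<Rightarrow> real \<Rightarrow> real" where
  "lower_lt F0 F1 a b = (SUP x\<in>{a<..<b}. pos_part (x - a - F1 (gen_inv F0 x)))"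

definition upper_lt :: "(real \<Rightarrow> real) \<Rightarrow> (real \<Rightarrow> real) \<Rightarrow> real \<Rightarrow> real \<Rightarrow> real" where
  "upper_lt F0 F1 a b = b - a - (SUP x\<in>{a<..<b}. pos_part (b - x - 1 + F1 (gen_inv F0 x)))"

definition lower_gt :: "(real \<Rightarrow> real) \<Rightarrow> (real \<Rightarrow> real) \<Rightarrow> real \<Rightarrow> real \<Rightarrow> real" where
  "lower_gt F0 F1 a b = (SUP x\<in>{a<..<b}. pos_part (b - x - 1 + left_lim F1 (gen_inv F0 x)))"

definition upper_gt :: "(real \<Rightarrow> real) \<Rightarrow> (real \<Rightarrow> real) \<Rightarrow> real \<Rightarrow> real \<Rightarrow> real" where
  "upper_gt F0 F1 a b = b - a - (SUP x\<in>{a<..<b}. pos_part (x - a - left_lim F1 (gen_inv F0 x)))"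

definition mono_lipschitz_bound :: "(real \<Rightarrow> real \<Rightarrow> real) \<Rightarrow> bool" where
  "mono_lipschitz_bound B \<longleftrightarrow>
     (\<forall>a a' b. 0 \<le> a \<and> a \<le> a' \<and> a' < b \<and> b \<le> 1 \<longrightarrow> B a' b \<le> B a b) \<and>
     (\<forall>a b b'. 0 \<le> a \<and> a < b \<and> b \<le> b' \<and> b' \<le> 1 \<longrightarrow> B a b \<le> B a b') \<and>
     (\<exists>C. \<forall>a a' b. 0 \<le> a \<and> 0 \<le> a' \<and> a < b \<and> a' < b \<and> b \<le> 1 \<longrightarrow>
            \<bar>B a b - B a' b\<bar> \<le> C * \<bar>a - a'\<bar>) \<and>
     (\<exists>C. \<forall>a b b'. 0 \<le> a \<and> a < b \<and> a < b' \<and> b \<le> 1 \<and> b' \<le> 1 \<longrightarrow>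
            \<bar>B a b - B a b'\<bar> \<le> C * \<bar>b - b'\<bar>)"

definition joint_with_marginals :: "(real \<times> real) measure \<Rightarrow> real measure \<Rightarrow> bool" where
  "joint_with_marginals N P1 \<longleftrightarrow>
     prob_space N \<and> sets N = sets borel \<and>
     distr N lborel fst = uniform_measure lborel {0..1} \<and>
     distr N borel snd = P1"

end

(*
  Everything is read off the joint law of (U, Y1) on the plane, with Y0 = Q0(U) for the
  nondecreasing function Q0.  For a < x < b, on {a < U < x} we have Y0 <= Q0(x), so either
  Y0 < Y1 or Y1 <= Q0(x); hence x - a <= P(a < U < b, Y0 < Y1) + F1(Q0(x)).  Likewise on
  {x < U < b} either Y1 <= Y0 or Y1 > Q0(x), which gives the upper bound.  The bounds for
  Y0 > Y1 are the same with F1(y-) in place of F1(y).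

  For sharpness put Y1 = Q1(rho(U)), where Q1 is a quantile function of F1 (left-continuous
  for the bounds with F1, right-continuous for those with F1(y-)) and rho is a rotation of
  [0,1) modulo 1, which preserves the uniform law.  The rotation carries the part of (a,b)
  that should not contribute onto quantile levels on which Y1 lies on the wrong side of Q0(U);
  the rest of (a,b) has length equal to the bound, or within epsilon of it.

  Each bound is a supremum over x in (a,b) of [x - a - G(x)]_+ or of [b - x - 1 + G(x)]_+
  with G nondecreasing and [0,1]-valued.  Such suprema are nonincreasing and 1-Lipschitz in a
  and nondecreasing and 1-Lipschitz in b, and the reflection x |-> 1 - x exchanges the two forms.
*)
theory Submission
  imports Defs
begin

section \<open>The uniform distribution on the unit interval\<close>

abbreviation uniform01 :: "real measure" where
  "uniform01 \<equiv> uniform_measure lborel {0..1}"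

lemma prob_space_uniform01: "prob_space uniform01"
  by (rule prob_space_uniform_measure) auto

lemma measure_uniform01_between:
  assumes "0 \<le> c" "c \<le> d" "d \<le> 1" "A \<in> sets borel" "{c<..<d} \<subseteq> A" "A \<subseteq> {c..d}"
  shows "measure uniform01 A = d - c"
proof -
  have Icc: "{c..d} \<in> fmeasurable lborel"
    by (simp add: fmeasurable_compact)
  have "measure lborel {c<..<d} \<le> measure lborel A"
    using assms(4-6) Icc by (intro measure_mono_fmeasurable fmeasurableI2[OF Icc]) auto
  moreover have "measure lborel A \<le> measure lborel {c..d}"
    using assms(4,6) Icc by (intro measure_mono_fmeasurable) auto
  moreover have "{0..1} \<inter> A = A"
    using assms(1,3,6) by auto
  ultimately show ?thesis
    using assms(2,4) by (simp add: measure_uniform_measure)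
qed

lemma measure_uniform01_Int_Ioo:
  assumes "A \<in> sets borel"
  shows "measure uniform01 (A \<inter> {0<..<1}) = measure uniform01 A"
proof -
  have "measure lborel ({0..1} \<inter> A) = measure lborel ({0..1} \<inter> A \<inter> {0<..<1})"
  proof (rule measure_eq_AE)
    have "AE x in lborel. x \<notin> {0, 1}"
      by (rule AE_not_in) (rule countable_imp_null_set_lborel, simp)
    then show "AE x in lborel. (x \<in> {0..1} \<inter> A) = (x \<in> {0..1} \<inter> A \<inter> {0<..<1})"
      by eventually_elim auto
  qed (use assms in auto)
  then show ?thesis
    using assms by (simp add: measure_uniform_measure Int_assoc)
qed
lemma measure_uniform01_le:
  assumes "0 \<le> c" "c \<le> d" "d \<le> 1" "A \<subseteq> {c..d}"
  shows "measure uniform01 A \<le> d - c"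
proof -
  interpret prob_space uniform01 by (rule prob_space_uniform01)
  have "measure uniform01 A \<le> measure uniform01 {c..d}"
    using assms(4) by (intro finite_measure_mono) auto
  also have "\<dots> = d - c"
    using assms by (intro measure_uniform01_between) auto
  finally show ?thesis .
qed

lemma measure_uniform01_ge:
  assumes "0 \<le> c" "c \<le> d" "d \<le> 1" "{c<..<d} \<subseteq> A" "A \<in> sets borel"
  shows "d - c \<le> measure uniform01 A"
proof -
  interpret prob_space uniform01 by (rule prob_space_uniform01)
  have "d - c = measure uniform01 {c<..<d}"
    using assms by (intro measure_uniform01_between[symmetric]) auto
  also have "\<dots> \<le> measure uniform01 A"
    using assms(4,5) by (intro finite_measure_mono) auto
  finally show ?thesis .
qed

section \<open>Quantile functions\<close>

(* Left- and right-continuous quantile functions.  The infima are junk outside (0,1); cutting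
   them off there makes the functions Borel measurable. *)
definition lquantile :: "real measure \<Rightarrow> real \<Rightarrow> real" where
  "lquantile D v = (if v \<in> {0<..<1} then gen_inv (cdf D) v else 0)"

definition rquantile :: "real measure \<Rightarrow> real \<Rightarrow> real" where
  "rquantile D v = (if v \<in> {0<..<1} then Inf {y. v < cdf D y} else 0)"

lemma borel_measurable_mono_on_unit:
  fixes f :: "real \<Rightarrow> real"
  assumes "mono_on {0<..<1} f" and "\<And>v. v \<notin> {0<..<1} \<Longrightarrow> f v = 0"
  shows "f \<in> borel_measurable borel"
proof -
  have "f \<in> borel_measurable (restrict_space borel {0<..<1})"
    using assms(1) by (rule borel_measurable_mono_on_fnc)
  then have "(\<lambda>v. if v \<in> {0<..<1} then f v else 0) \<in> borel_measurable borel"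
    by (subst (asm) measurable_restrict_space_iff) auto
  also have "(\<lambda>v. if v \<in> {0<..<1} then f v else 0) = f"
    using assms(2) by auto
  finally show ?thesis .
qed

lemma distr_uniform01_quantile:
  assumes D: "real_distribution D" and Q: "Q \<in> borel_measurable borel"
    and le_if_less_cdf: "\<And>v y. v \<in> {0<..<1} \<Longrightarrow> v < cdf D y \<Longrightarrow> Q v \<le> y"
    and le_cdf_if_le: "\<And>v y. v \<in> {0<..<1} \<Longrightarrow> Q v \<le> y \<Longrightarrow> v \<le> cdf D y"
  shows "distr uniform01 borel Q = D"
proof (rule cdf_unique)
  interpret D: real_distribution D by (fact D)
  interpret U: prob_space uniform01 by (rule prob_space_uniform01)
  have Q': "Q \<in> borel_measurable uniform01"
    using Q by (simp cong: measurable_cong_sets)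
  show "real_distribution (distr uniform01 borel Q)"
    using Q' by simp
  show "cdf (distr uniform01 borel Q) = cdf D"
  proof
    fix y
    have S: "{v. Q v \<le> y} \<in> sets borel"
      using Q by measurable
    have "cdf (distr uniform01 borel Q) y = measure uniform01 {v. Q v \<le> y}"
      unfolding cdf_def using Q' by (subst measure_distr) (auto simp: vimage_def)
    also have "\<dots> = measure uniform01 ({v. Q v \<le> y} \<inter> {0<..<1})"
      using S by (rule measure_uniform01_Int_Ioo[symmetric])
    also have "\<dots> = cdf D y"
    proof -
      have "{0<..<cdf D y} \<subseteq> {v. Q v \<le> y} \<inter> {0<..<1}"
        using le_if_less_cdf D.cdf_bounded_prob[of y] by fastforce
      moreover have "{v. Q v \<le> y} \<inter> {0<..<1} \<subseteq> {0..cdf D y}"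
        using le_cdf_if_le by fastforce
      ultimately show ?thesis
        using measure_uniform01_between[of 0 "cdf D y"] S D.cdf_nonneg D.cdf_bounded_prob by simp
    qed
    finally show "cdf (distr uniform01 borel Q) y = cdf D y" .
  qed
qed (fact D)

context real_distribution
begin

lemma cdf_eventually_less: "0 < v \<Longrightarrow> \<exists>y0. \<forall>y\<le>y0. cdf M y < v"
  using order_tendstoD(2)[OF cdf_lim_at_bot] by (auto simp: eventually_at_bot_linorder)

lemma cdf_eventually_greater: "v < 1 \<Longrightarrow> \<exists>y0. \<forall>y\<ge>y0. v < cdf M y"
  using order_tendstoD(1)[OF cdf_lim_at_top_prob] by (auto simp: eventually_at_top_linorder)

lemma bdd_below_cdf_ge:
  assumes "0 < v"
  shows "bdd_below {y. v \<le> cdf M y}"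
proof -
  obtain y0 where "\<forall>y\<le>y0. cdf M y < v"
    using cdf_eventually_less[OF assms] by blast
  then have "y0 \<le> y" if "v \<le> cdf M y" for y
    using that by (meson linorder_not_le order_less_imp_le)
  then show ?thesis
    by (intro bdd_belowI[of _ y0]) blast
qed

lemma gen_inv_cdf_le_iff:
  assumes "0 < v" "v < 1"
  shows "gen_inv (cdf M) v \<le> y \<longleftrightarrow> v \<le> cdf M y"
proof
  assume le: "gen_inv (cdf M) v \<le> y"
  let ?q = "gen_inv (cdf M) v"
  obtain y1 where "\<forall>y\<ge>y1. v < cdf M y"
    using cdf_eventually_greater[OF assms(2)] by blast
  then have ne: "{y. v \<le> cdf M y} \<noteq> {}"
    by (metis empty_iff less_eq_real_def mem_Collect_eq order_refl)
  have "v \<le> cdf M z" if "?q < z" for z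
  proof -
    obtain s where "v \<le> cdf M s" "s < z"
      using cInf_lessD[OF ne] \<open>?q < z\<close> by (auto simp: gen_inv_def)
    then show ?thesis
      using cdf_nondecreasing[of s z] by linarith
  qed
  then have "v \<le> cdf M ?q"
    by (intro tendsto_lowerbound[OF cdf_is_right_cont[unfolded continuous_within]])
       (auto simp: eventually_at_right_field intro: gt_ex)
  also have "\<dots> \<le> cdf M y"
    using le by (rule cdf_nondecreasing)
  finally show "v \<le> cdf M y" .
next
  assume "v \<le> cdf M y"
  then show "gen_inv (cdf M) v \<le> y"
    unfolding gen_inv_def using bdd_below_cdf_ge[OF assms(1)] by (intro cInf_lower) auto
qed

lemma mono_on_gen_inv_cdf: "mono_on {0<..<1} (gen_inv (cdf M))"
proof (intro mono_onI)
  fix r s :: real assume "r \<in> {0<..<1}" "s \<in> {0<..<1}" "r \<le> s"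
  then show "gen_inv (cdf M) r \<le> gen_inv (cdf M) s"
    using gen_inv_cdf_le_iff[of s "gen_inv (cdf M) s"] gen_inv_cdf_le_iff[of r "gen_inv (cdf M) s"]
    by simp
qed

lemma Inf_cdf_gt_less_iff:
  assumes "0 < v" "v < 1"
  shows "Inf {y. v < cdf M y} < y \<longleftrightarrow> v < measure M {..<y}"
proof
  assume lt: "Inf {y. v < cdf M y} < y"
  obtain y1 where "\<forall>y\<ge>y1. v < cdf M y"
    using cdf_eventually_greater[OF assms(2)] by blast
  then have "{y. v < cdf M y} \<noteq> {}"
    by auto
  then obtain s where "v < cdf M s" "s < y"
    using cInf_lessD[OF _ lt] by blast
  moreover have "cdf M s \<le> measure M {..<y}"
    unfolding cdf_def using \<open>s < y\<close> by (intro finite_measure_mono) auto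
  ultimately show "v < measure M {..<y}"
    by linarith
next
  assume "v < measure M {..<y}"
  then have "\<forall>\<^sub>F z in at_left y. v < cdf M z"
    by (rule order_tendstoD(1)[OF cdf_at_left])
  then obtain b where "b < y" "\<And>z. b < z \<Longrightarrow> z < y \<Longrightarrow> v < cdf M z"
    by (auto simp: eventually_at_left_field)
  moreover from \<open>b < y\<close> obtain z where "b < z" "z < y"
    using dense by blast
  ultimately have "v < cdf M z" "z < y"
    by auto
  moreover have "bdd_below {y. v < cdf M y}"
    using bdd_below_cdf_ge[OF assms(1)] by (rule bdd_below_mono) (auto intro: less_imp_le)
  ultimately have "Inf {y. v < cdf M y} \<le> z"
    by (intro cInf_lower) auto
  with \<open>z < y\<close> show "Inf {y. v < cdf M y} < y"
    by linarith
qed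

lemma rquantile_less_iff:
  assumes "v \<in> {0<..<1}"
  shows "rquantile M v < y \<longleftrightarrow> v < measure M {..<y}"
  using assms Inf_cdf_gt_less_iff[of v y] unfolding rquantile_def by simp

lemma rquantile_le:
  assumes "v \<in> {0<..<1}" "v < cdf M y"
  shows "rquantile M v \<le> y"
proof (rule dense_ge)
  fix z assume "y < z"
  then have "cdf M y \<le> measure M {..<z}"
    unfolding cdf_def by (intro finite_measure_mono) auto
  then have "v < measure M {..<z}"
    using assms(2) by linarith
  then show "rquantile M v \<le> z"
    using rquantile_less_iff[OF assms(1)] by (simp add: less_imp_le)
qed

lemma cdf_ge_if_rquantile_le:
  assumes v: "v \<in> {0<..<1}" and le: "rquantile M v \<le> y"
  shows "v \<le> cdf M y"
proof (rule tendsto_lowerbound[OF cdf_is_right_cont[unfolded continuous_within]])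
  have "v \<le> cdf M z" if "y < z" for z
  proof -
    have "rquantile M v < z"
      using le \<open>y < z\<close> by linarith
    then have "v < measure M {..<z}"
      using rquantile_less_iff[OF v] by simp
    also have "\<dots> \<le> cdf M z"
      unfolding cdf_def by (intro finite_measure_mono) auto
    finally show ?thesis by simp
  qed
  then show "\<forall>\<^sub>F z in at_right y. v \<le> cdf M z"
    by (auto simp: eventually_at_right_field intro: gt_ex)
qed simp

lemma mono_on_rquantile: "mono_on {0<..<1} (rquantile M)"
proof (intro mono_onI)
  fix r s :: real assume r: "r \<in> {0<..<1}" and s: "s \<in> {0<..<1}" and "r \<le> s"
  have "rquantile M r < y" if "rquantile M s < y" for y
  proof -
    have "s < measure M {..<y}"
      using that rquantile_less_iff[OF s] by blast
    then show ?thesis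
      using \<open>r \<le> s\<close> rquantile_less_iff[OF r] by simp
  qed
  then show "rquantile M r \<le> rquantile M s"
    by (meson dense_ge less_imp_le)
qed

lemma borel_measurable_rquantile: "rquantile M \<in> borel_measurable borel"
  by (rule borel_measurable_mono_on_unit[OF mono_on_rquantile]) (auto simp: rquantile_def)

lemma lquantile_le_iff: "v \<in> {0<..<1} \<Longrightarrow> lquantile M v \<le> y \<longleftrightarrow> v \<le> cdf M y"
  by (simp add: lquantile_def gen_inv_cdf_le_iff)

lemma borel_measurable_lquantile: "lquantile M \<in> borel_measurable borel"
proof (rule borel_measurable_mono_on_unit)
  show "mono_on {0<..<1} (lquantile M)"
    using mono_on_gen_inv_cdf unfolding mono_on_def lquantile_def by presburger
qed (auto simp: lquantile_def)

lemma distr_uniform01_lquantile: "distr uniform01 borel (lquantile M) = M"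
  by (intro distr_uniform01_quantile real_distribution_axioms borel_measurable_lquantile)
     (auto simp: lquantile_le_iff)

lemma distr_uniform01_rquantile: "distr uniform01 borel (rquantile M) = M"
  by (intro distr_uniform01_quantile real_distribution_axioms borel_measurable_rquantile)
     (auto simp: rquantile_le cdf_ge_if_rquantile_le)

end

section \<open>Rotations of the unit interval\<close>

definition rotate01 :: "real \<Rightarrow> real \<Rightarrow> real" where
  "rotate01 t u = (if u < t then u + (1 - t) else u - t)"

lemma borel_measurable_rotate01 [measurable]: "rotate01 t \<in> borel_measurable borel"
  unfolding rotate01_def by measurable

lemma emeasure_lborel_vimage_translate:
  fixes c :: real
  assumes "B \<in> sets borel"
  shows "emeasure lborel ((\<lambda>u. u + c) -` B) = emeasure lborel B"
proof -
  have "emeasure lborel B = emeasure (distr lborel borel ((+) c)) B"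
    by (simp add: lborel_distr_plus)
  also have "\<dots> = emeasure lborel ((+) c -` B)"
    using assms by (subst emeasure_distr) auto
  also have "(+) c = (\<lambda>u. u + c)"
    by (auto simp: fun_eq_iff)
  finally show ?thesis ..
qed

lemma sets_borel_vimage_translate:
  fixes c :: real
  assumes "B \<in> sets borel"
  shows "(\<lambda>u. u + c) -` B \<in> sets borel"
proof -
  have "(\<lambda>u. u + c) \<in> borel_measurable borel"
    by measurable
  from measurable_sets[OF this assms] show ?thesis
    by simp
qed

lemma distr_uniform01_rotate01:
  assumes "0 \<le> t" "t \<le> 1"
  shows "distr uniform01 borel (rotate01 t) = uniform01"
proof (rule measure_eqI)
  fix A assume "A \<in> sets (distr uniform01 borel (rotate01 t))"
  then have A: "A \<in> sets borel"
    by simp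
  define T1 where "T1 = (\<lambda>u. u + (1 - t)) -` (A \<inter> {1 - t..<1})"
  define T2 where "T2 = (\<lambda>u. u - t) -` (A \<inter> {0..<1 - t})"
  have T: "T1 \<in> sets borel" "T2 \<in> sets borel"
    using A sets_borel_vimage_translate[of _ "1 - t"] sets_borel_vimage_translate[of _ "- t"]
    by (auto simp: T1_def T2_def)
  have "emeasure lborel ({0..1} \<inter> rotate01 t -` A) = emeasure lborel (T1 \<union> T2)"
  proof (rule emeasure_eq_AE)
    show "AE x in lborel. x \<in> {0..1} \<inter> rotate01 t -` A \<longleftrightarrow> x \<in> T1 \<union> T2"
      using AE_lborel_singleton[of 1]
      by eventually_elim (use assms in \<open>auto simp: T1_def T2_def rotate01_def split: if_splits\<close>)
  qed (use A T in auto)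
  also have "\<dots> = emeasure lborel T1 + emeasure lborel T2"
    using T assms by (intro plus_emeasure[symmetric]) (auto simp: T1_def T2_def)
  also have "\<dots> = emeasure lborel (A \<inter> {1 - t..<1}) + emeasure lborel (A \<inter> {0..<1 - t})"
  proof -
    have "emeasure lborel T1 = emeasure lborel (A \<inter> {1 - t..<1})"
      unfolding T1_def using A by (intro emeasure_lborel_vimage_translate) auto
    moreover have "emeasure lborel T2 = emeasure lborel (A \<inter> {0..<1 - t})"
      unfolding T2_def diff_conv_add_uminus[of _ t] using A by (intro emeasure_lborel_vimage_translate) auto
    ultimately show ?thesis
      by simp
  qed
  also have "\<dots> = emeasure lborel (A \<inter> {1 - t..<1} \<union> A \<inter> {0..<1 - t})"
    using A by (intro plus_emeasure) auto
  also have "\<dots> = emeasure lborel ({0..1} \<inter> A)"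
  proof (rule emeasure_eq_AE)
    show "AE x in lborel. x \<in> A \<inter> {1 - t..<1} \<union> A \<inter> {0..<1 - t} \<longleftrightarrow> x \<in> {0..1} \<inter> A"
      using AE_lborel_singleton[of 1] by eventually_elim (use assms in auto)
  qed (use A in auto)
  finally have "emeasure lborel ({0..1} \<inter> rotate01 t -` A) = emeasure lborel ({0..1} \<inter> A)" .
  moreover have "rotate01 t -` A \<in> sets borel"
    using measurable_sets[OF borel_measurable_rotate01 A] by simp
  ultimately show "emeasure (distr uniform01 borel (rotate01 t)) A = emeasure uniform01 A"
    using A by (simp add: emeasure_distr)
qed simp

section \<open>The bounds as suprema\<close>

definition left_excess :: "(real \<Rightarrow> real) \<Rightarrow> real \<Rightarrow> real \<Rightarrow> real" where
  "left_excess G a b = (SUP x\<in>{a<..<b}. pos_part (x - a - G x))"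

definition right_excess :: "(real \<Rightarrow> real) \<Rightarrow> real \<Rightarrow> real \<Rightarrow> real" where
  "right_excess G a b = (SUP x\<in>{a<..<b}. pos_part (b - x - 1 + G x))"

lemma lower_lt_eq_left_excess: "lower_lt F0 F1 = left_excess (\<lambda>x. F1 (gen_inv F0 x))"
  by (simp add: fun_eq_iff lower_lt_def left_excess_def)

lemma upper_lt_eq_right_excess:
  "upper_lt F0 F1 = (\<lambda>a b. b - a - right_excess (\<lambda>x. F1 (gen_inv F0 x)) a b)"
  by (simp add: fun_eq_iff upper_lt_def right_excess_def)

lemma lower_gt_eq_right_excess: "lower_gt F0 F1 = right_excess (\<lambda>x. left_lim F1 (gen_inv F0 x))"
  by (simp add: fun_eq_iff lower_gt_def right_excess_def)

lemma upper_gt_eq_left_excess: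
  "upper_gt F0 F1 = (\<lambda>a b. b - a - left_excess (\<lambda>x. left_lim F1 (gen_inv F0 x)) a b)"
  by (simp add: fun_eq_iff upper_gt_def left_excess_def)

definition unit_slope_bound :: "(real \<Rightarrow> real \<Rightarrow> real) \<Rightarrow> bool" where
  "unit_slope_bound B \<longleftrightarrow>
     (\<forall>a a' b. 0 \<le> a \<and> a \<le> a' \<and> a' < b \<and> b \<le> 1 \<longrightarrow> B a' b \<le> B a b \<and> B a b \<le> B a' b + (a' - a)) \<and>
     (\<forall>a b b'. 0 \<le> a \<and> a < b \<and> b \<le> b' \<and> b' \<le> 1 \<longrightarrow> B a b \<le> B a b' \<and> B a b' \<le> B a b + (b' - b))"

definition unit_monotone :: "(real \<Rightarrow> real) \<Rightarrow> bool" where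
  "unit_monotone G \<longleftrightarrow> mono_on {0<..<1} G \<and> (\<forall>x. 0 \<le> G x \<and> G x \<le> 1)"

lemma unit_monotoneD:
  assumes "unit_monotone G"
  shows "0 \<le> G x" and "G x \<le> 1" and "0 < x \<Longrightarrow> x \<le> y \<Longrightarrow> y < 1 \<Longrightarrow> G x \<le> G y"
  using assms unfolding unit_monotone_def by (auto intro: mono_onD)

lemma left_excess_least:
  assumes "a < b" "0 \<le> c" "\<And>x. a < x \<Longrightarrow> x < b \<Longrightarrow> x - a - G x \<le> c"
  shows "left_excess G a b \<le> c"
  unfolding left_excess_def pos_part_def using assms by (intro cSUP_least) auto

lemma right_excess_least:
  assumes "a < b" "0 \<le> c" "\<And>x. a < x \<Longrightarrow> x < b \<Longrightarrow> b - x - 1 + G x \<le> c"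
  shows "right_excess G a b \<le> c"
  unfolding right_excess_def pos_part_def using assms by (intro cSUP_least) auto

context
  fixes G :: "real \<Rightarrow> real"
  assumes G: "unit_monotone G"
begin

lemma pos_part_le_left_excess:
  assumes "a < x" "x < b"
  shows "pos_part (x - a - G x) \<le> left_excess G a b"
proof -
  have "pos_part (y - a - G y) \<le> b - a" if "y \<in> {a<..<b}" for y
    using unit_monotoneD(1)[OF G, of y] that unfolding pos_part_def by auto
  then have "bdd_above ((\<lambda>y. pos_part (y - a - G y)) ` {a<..<b})"
    by (rule bdd_aboveI2)
  then show ?thesis
    unfolding left_excess_def using assms by (intro cSUP_upper) auto
qed

lemma left_excess_ge: "a < x \<Longrightarrow> x < b \<Longrightarrow> x - a - G x \<le> left_excess G a b"
  using pos_part_le_left_excess[of a x b] by (simp add: pos_part_def)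

lemma left_excess_nonneg: "a < b \<Longrightarrow> 0 \<le> left_excess G a b"
  using pos_part_le_left_excess[of a "(a + b) / 2" b] by (simp add: pos_part_def)

lemma left_excess_le_diff:
  assumes "a < b"
  shows "left_excess G a b \<le> b - a"
proof (rule left_excess_least)
  fix x assume "a < x" "x < b"
  then show "x - a - G x \<le> b - a"
    using unit_monotoneD(1)[OF G, of x] by linarith
qed (use assms in auto)

lemma unit_slope_bound_left_excess: "unit_slope_bound (left_excess G)"
  unfolding unit_slope_bound_def
proof (intro conjI allI impI)
  fix a a' b :: real assume h: "0 \<le> a \<and> a \<le> a' \<and> a' < b \<and> b \<le> 1"
  show "left_excess G a' b \<le> left_excess G a b"
  proof (rule left_excess_least)
    fix x assume "a' < x" "x < b"
    then show "x - a' - G x \<le> left_excess G a b"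
      using left_excess_ge[of a x b] h by simp
  qed (use h left_excess_nonneg[of a b] in auto)
  show "left_excess G a b \<le> left_excess G a' b + (a' - a)"
  proof (rule left_excess_least)
    fix x assume "a < x" "x < b"
    show "x - a - G x \<le> left_excess G a' b + (a' - a)"
    proof (cases "a' < x")
      case True
      then show ?thesis
        using left_excess_ge[of a' x b] \<open>x < b\<close> by simp
    next
      case False
      then show ?thesis
        using unit_monotoneD(1)[OF G, of x] left_excess_nonneg[of a' b] h by linarith
    qed
  qed (use h left_excess_nonneg[of a' b] in auto)
next
  fix a b b' :: real assume h: "0 \<le> a \<and> a < b \<and> b \<le> b' \<and> b' \<le> 1"
  show "left_excess G a b \<le> left_excess G a b'"
  proof (rule left_excess_least)
    fix x assume "a < x" "x < b"
    then show "x - a - G x \<le> left_excess G a b'"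
      using left_excess_ge[of a x b'] h by simp
  qed (use h left_excess_nonneg[of a b'] in auto)
  show "left_excess G a b' \<le> left_excess G a b + (b' - b)"
  proof (rule left_excess_least)
    fix x assume "a < x" "x < b'"
    show "x - a - G x \<le> left_excess G a b + (b' - b)"
    proof (cases "x < b")
      case True
      then show ?thesis
        using left_excess_ge[of a x b] \<open>a < x\<close> h by simp
    next
      case False
      from h have "a < b"
        by simp
      \<comment> \<open>let \<open>z \<in> (a, b)\<close> tend to \<open>b \<le> x\<close>, using \<open>G z \<le> G x\<close>\<close>
      then have "b \<le> left_excess G a b + a + G x"
      proof (rule dense_le_bounded)
        fix z assume "a < z" "z < b"
        then have "G z \<le> G x"
          using False h \<open>x < b'\<close> by (intro unit_monotoneD(3)[OF G]) auto
        then show "z \<le> left_excess G a b + a + G x"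
          using left_excess_ge[OF \<open>a < z\<close> \<open>z < b\<close>] by linarith
      qed
      then show ?thesis
        using \<open>x < b'\<close> by linarith
    qed
  qed (use h left_excess_nonneg[of a b] in auto)
qed

end

lemma right_excess_eq_left_excess_reflect:
  "right_excess G a b = left_excess (\<lambda>x. 1 - G (1 - x)) (1 - b) (1 - a)"
proof -
  have "{1 - b<..<1 - a} = (\<lambda>x. 1 - x) ` {a<..<b}"
    by (auto simp: image_iff intro!: bexI[of _ "1 - x" for x])
  then show ?thesis
    unfolding right_excess_def left_excess_def by (simp add: image_comp comp_def algebra_simps)
qed

lemma unit_monotone_reflect: "unit_monotone G \<Longrightarrow> unit_monotone (\<lambda>x. 1 - G (1 - x))"
  unfolding unit_monotone_def mono_on_def by auto

lemma unit_slope_bound_reflect: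
  assumes "unit_slope_bound B"
  shows "unit_slope_bound (\<lambda>a b. B (1 - b) (1 - a))"
proof -
  have left: "B a' b \<le> B a b \<and> B a b \<le> B a' b + (a' - a)"
    if "0 \<le> a" "a \<le> a'" "a' < b" "b \<le> 1" for a a' b
    using assms that unfolding unit_slope_bound_def by blast
  have right: "B a b \<le> B a b' \<and> B a b' \<le> B a b + (b' - b)"
    if "0 \<le> a" "a < b" "b \<le> b'" "b' \<le> 1" for a b b'
    using assms that unfolding unit_slope_bound_def by blast
  show ?thesis
    unfolding unit_slope_bound_def
  proof (intro conjI allI impI)
    fix a a' b :: real assume "0 \<le> a \<and> a \<le> a' \<and> a' < b \<and> b \<le> 1"
    then show "B (1 - b) (1 - a') \<le> B (1 - b) (1 - a)"
      and "B (1 - b) (1 - a) \<le> B (1 - b) (1 - a') + (a' - a)"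
      using right[of "1 - b" "1 - a'" "1 - a"] by auto
  next
    fix a b b' :: real assume "0 \<le> a \<and> a < b \<and> b \<le> b' \<and> b' \<le> 1"
    then show "B (1 - b) (1 - a) \<le> B (1 - b') (1 - a)"
      and "B (1 - b') (1 - a) \<le> B (1 - b) (1 - a) + (b' - b)"
      using left[of "1 - b'" "1 - b" "1 - a"] by auto
  qed
qed

lemma unit_slope_bound_right_excess:
  assumes "unit_monotone G"
  shows "unit_slope_bound (right_excess G)"
proof -
  have "right_excess G = (\<lambda>a b. left_excess (\<lambda>x. 1 - G (1 - x)) (1 - b) (1 - a))"
    by (simp add: fun_eq_iff right_excess_eq_left_excess_reflect)
  then show ?thesis
    using unit_slope_bound_reflect[OF unit_slope_bound_left_excess[OF unit_monotone_reflect[OF assms]]]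
    by simp
qed

lemma unit_slope_bound_complement:
  assumes "unit_slope_bound B"
  shows "unit_slope_bound (\<lambda>a b. b - a - B a b)"
  using assms unfolding unit_slope_bound_def by (smt (verit))

lemma mono_lipschitz_bound_if_unit_slope:
  assumes "unit_slope_bound B"
  shows "mono_lipschitz_bound B"
proof -
  have left: "\<bar>B a b - B a' b\<bar> \<le> a' - a" if "0 \<le> a" "a \<le> a'" "a' < b" "b \<le> 1" for a a' b
    using assms that unfolding unit_slope_bound_def by (smt (verit))
  have right: "\<bar>B a b - B a b'\<bar> \<le> b' - b" if "0 \<le> a" "a < b" "b \<le> b'" "b' \<le> 1" for a b b'
    using assms that unfolding unit_slope_bound_def by (smt (verit))
  show ?thesis
    unfolding mono_lipschitz_bound_def
  proof (intro conjI exI[of _ 1] allI impI)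
    fix a a' b :: real assume "0 \<le> a \<and> 0 \<le> a' \<and> a < b \<and> a' < b \<and> b \<le> 1"
    then show "\<bar>B a b - B a' b\<bar> \<le> 1 * \<bar>a - a'\<bar>"
      using left[of a a' b] left[of a' a b] by (cases "a \<le> a'") (auto simp: abs_minus_commute)
  next
    fix a b b' :: real assume "0 \<le> a \<and> a < b \<and> a < b' \<and> b \<le> 1 \<and> b' \<le> 1"
    then show "\<bar>B a b - B a b'\<bar> \<le> 1 * \<bar>b - b'\<bar>"
      using right[of a b b'] right[of a b' b] by (cases "b \<le> b'") (auto simp: abs_minus_commute)
  qed (use assms in \<open>auto simp: unit_slope_bound_def\<close>)
qed

lemma right_excess_ge:
  assumes "unit_monotone G" "a < x" "x < b"
  shows "b - x - 1 + G x \<le> right_excess G a b"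
  using left_excess_ge[OF unit_monotone_reflect[OF assms(1)], of "1 - b" "1 - x" "1 - a"] assms(2,3)
  by (simp add: right_excess_eq_left_excess_reflect)

lemma right_excess_nonneg: "unit_monotone G \<Longrightarrow> a < b \<Longrightarrow> 0 \<le> right_excess G a b"
  using left_excess_nonneg[OF unit_monotone_reflect, of G "1 - b" "1 - a"]
  by (simp add: right_excess_eq_left_excess_reflect)

lemma right_excess_le_diff: "unit_monotone G \<Longrightarrow> a < b \<Longrightarrow> right_excess G a b \<le> b - a"
  using left_excess_le_diff[OF unit_monotone_reflect, of G "1 - b" "1 - a"]
  by (simp add: right_excess_eq_left_excess_reflect)

lemma left_lim_cdf:
  assumes "real_distribution D"
  shows "left_lim (cdf D) y = measure D {..<y}"
proof -
  interpret real_distribution D by (fact assms)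
  show ?thesis
    unfolding left_lim_def by (intro tendsto_Lim cdf_at_left) simp
qed

lemma unit_monotone_cdf_comp:
  assumes "real_distribution D" "mono_on {0<..<1} q"
  shows "unit_monotone (\<lambda>x. cdf D (q x))"
proof -
  interpret real_distribution D by (fact assms(1))
  show ?thesis
    using assms(2) unfolding unit_monotone_def mono_on_def
    by (auto intro: cdf_nondecreasing cdf_nonneg cdf_bounded_prob)
qed

lemma unit_monotone_left_lim_cdf_comp:
  assumes "real_distribution D" "mono_on {0<..<1} q"
  shows "unit_monotone (\<lambda>x. left_lim (cdf D) (q x))"
proof -
  interpret real_distribution D by (fact assms(1))
  show ?thesis
    using assms(2) unfolding unit_monotone_def mono_on_def left_lim_cdf[OF assms(1)]
    by (auto intro!: finite_measure_mono)
qed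

section \<open>Bounds for an arbitrary joint law\<close>

(* The events {a < U < b, Q0(U) < Y1} and {a < U < b, Q0(U) > Y1} in terms of (U, Y1). *)
definition window_lt :: "(real \<Rightarrow> real) \<Rightarrow> real \<Rightarrow> real \<Rightarrow> (real \<times> real) set" where
  "window_lt q a b = {p. a < fst p \<and> fst p < b \<and> q (fst p) < snd p}"

definition window_gt :: "(real \<Rightarrow> real) \<Rightarrow> real \<Rightarrow> real \<Rightarrow> (real \<times> real) set" where
  "window_gt q a b = {p. a < fst p \<and> fst p < b \<and> q (fst p) > snd p}"

lemma sets_window:
  assumes q: "mono_on {0<..<1} q" and ab: "0 \<le> a" "b \<le> 1"
  shows "window_lt q a b \<in> sets borel" and "window_gt q a b \<in> sets borel"
proof -
  define g where "g v = (if v \<in> {0<..<1} then q v else 0)" for v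
  have [measurable]: "g \<in> borel_measurable borel"
    using q by (intro borel_measurable_mono_on_unit) (auto simp: g_def mono_on_def)
  have "Measurable.pred (borel \<Otimes>\<^sub>M borel) (\<lambda>p :: real \<times> real. a < fst p \<and> fst p < b \<and> g (fst p) < snd p)"
    "Measurable.pred (borel \<Otimes>\<^sub>M borel) (\<lambda>p :: real \<times> real. a < fst p \<and> fst p < b \<and> g (fst p) > snd p)"
    by measurable
  moreover have "window_lt q a b = {p. a < fst p \<and> fst p < b \<and> g (fst p) < snd p}"
    "window_gt q a b = {p. a < fst p \<and> fst p < b \<and> g (fst p) > snd p}"
    using ab by (auto simp: window_lt_def window_gt_def g_def)
  ultimately show "window_lt q a b \<in> sets borel" "window_gt q a b \<in> sets borel"
    by (simp_all add: borel_prod pred_def)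
qed

lemma joint_with_marginals_distr_pair:
  assumes M: "prob_space M" and U: "U \<in> borel_measurable M" and Y: "Y \<in> borel_measurable M"
    and dU: "distr M lborel U = uniform01"
  shows "joint_with_marginals (distr M borel (\<lambda>\<omega>. (U \<omega>, Y \<omega>))) (distr M borel Y)"
  unfolding joint_with_marginals_def
proof (intro conjI)
  interpret prob_space M by (fact M)
  have UY: "(\<lambda>\<omega>. (U \<omega>, Y \<omega>)) \<in> borel_measurable M"
    using U Y by measurable
  have fst: "fst \<in> borel_measurable (borel :: (real \<times> real) measure)"
    and snd: "snd \<in> borel_measurable (borel :: (real \<times> real) measure)"
    by (simp_all add: borel_measurable_continuous_onI continuous_on_fst continuous_on_snd continuous_on_id)
  show "prob_space (distr M borel (\<lambda>\<omega>. (U \<omega>, Y \<omega>)))"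
    using UY by (rule prob_space_distr)
  show "sets (distr M borel (\<lambda>\<omega>. (U \<omega>, Y \<omega>))) = sets borel"
    by simp
  have "distr (distr M borel (\<lambda>\<omega>. (U \<omega>, Y \<omega>))) lborel fst = distr M lborel U"
    using UY fst by (subst distr_distr) (auto simp: comp_def)
  then show "distr (distr M borel (\<lambda>\<omega>. (U \<omega>, Y \<omega>))) lborel fst = uniform01"
    using dU by simp
  show "distr (distr M borel (\<lambda>\<omega>. (U \<omega>, Y \<omega>))) borel snd = distr M borel Y"
    using UY snd by (subst distr_distr) (auto simp: comp_def)
qed

lemma measure_window_distr_pair:
  assumes M: "prob_space M" and [measurable]: "U \<in> borel_measurable M" "Y \<in> borel_measurable M"
    "Y0 \<in> borel_measurable M" and AE: "AE \<omega> in M. Y0 \<omega> = q (U \<omega>)"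
    and q: "mono_on {0<..<1} q" and ab: "0 \<le> a" "b \<le> 1"
  shows "measure M {\<omega>\<in>space M. a < U \<omega> \<and> U \<omega> < b \<and> Y0 \<omega> < Y \<omega>} =
      measure (distr M borel (\<lambda>\<omega>. (U \<omega>, Y \<omega>))) (window_lt q a b)"
    and "measure M {\<omega>\<in>space M. a < U \<omega> \<and> U \<omega> < b \<and> Y0 \<omega> > Y \<omega>} =
      measure (distr M borel (\<lambda>\<omega>. (U \<omega>, Y \<omega>))) (window_gt q a b)"
proof -
  have UY: "(\<lambda>\<omega>. (U \<omega>, Y \<omega>)) \<in> borel_measurable M"
    by measurable
  have W: "window_lt q a b \<in> sets borel" "window_gt q a b \<in> sets borel"
    using sets_window[OF q ab] by auto
  have "(\<lambda>\<omega>. (U \<omega>, Y \<omega>)) -` window_lt q a b \<inter> space M \<in> sets M"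
    "(\<lambda>\<omega>. (U \<omega>, Y \<omega>)) -` window_gt q a b \<inter> space M \<in> sets M"
    using measurable_sets[OF UY] W by auto
  then have sets_q: "{\<omega>\<in>space M. a < U \<omega> \<and> U \<omega> < b \<and> q (U \<omega>) < Y \<omega>} \<in> sets M"
    "{\<omega>\<in>space M. a < U \<omega> \<and> U \<omega> < b \<and> q (U \<omega>) > Y \<omega>} \<in> sets M"
    by (simp_all add: vimage_def window_lt_def window_gt_def Int_def conj_commute)
  have "measure M {\<omega>\<in>space M. a < U \<omega> \<and> U \<omega> < b \<and> Y0 \<omega> < Y \<omega>} =
      measure M {\<omega>\<in>space M. a < U \<omega> \<and> U \<omega> < b \<and> q (U \<omega>) < Y \<omega>}"
  proof (rule measure_eq_AE)
    show "AE \<omega> in M. \<omega> \<in> {\<omega>\<in>space M. a < U \<omega> \<and> U \<omega> < b \<and> Y0 \<omega> < Y \<omega>} \<longleftrightarrow>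
        \<omega> \<in> {\<omega>\<in>space M. a < U \<omega> \<and> U \<omega> < b \<and> q (U \<omega>) < Y \<omega>}"
      using AE by eventually_elim auto
  qed (use sets_q in measurable)
  also have "\<dots> = measure (distr M borel (\<lambda>\<omega>. (U \<omega>, Y \<omega>))) (window_lt q a b)"
    using UY W by (subst measure_distr) (auto simp: vimage_def window_lt_def Int_def conj_commute)
  finally show "measure M {\<omega>\<in>space M. a < U \<omega> \<and> U \<omega> < b \<and> Y0 \<omega> < Y \<omega>} =
      measure (distr M borel (\<lambda>\<omega>. (U \<omega>, Y \<omega>))) (window_lt q a b)" .
  have "measure M {\<omega>\<in>space M. a < U \<omega> \<and> U \<omega> < b \<and> Y0 \<omega> > Y \<omega>} =
      measure M {\<omega>\<in>space M. a < U \<omega> \<and> U \<omega> < b \<and> q (U \<omega>) > Y \<omega>}"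
  proof (rule measure_eq_AE)
    show "AE \<omega> in M. \<omega> \<in> {\<omega>\<in>space M. a < U \<omega> \<and> U \<omega> < b \<and> Y0 \<omega> > Y \<omega>} \<longleftrightarrow>
        \<omega> \<in> {\<omega>\<in>space M. a < U \<omega> \<and> U \<omega> < b \<and> q (U \<omega>) > Y \<omega>}"
      using AE by eventually_elim auto
  qed (use sets_q in measurable)
  also have "\<dots> = measure (distr M borel (\<lambda>\<omega>. (U \<omega>, Y \<omega>))) (window_gt q a b)"
    using UY W by (subst measure_distr) (auto simp: vimage_def window_gt_def Int_def conj_commute)
  finally show "measure M {\<omega>\<in>space M. a < U \<omega> \<and> U \<omega> < b \<and> Y0 \<omega> > Y \<omega>} =
      measure (distr M borel (\<lambda>\<omega>. (U \<omega>, Y \<omega>))) (window_gt q a b)" .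
qed

context
  fixes N :: "(real \<times> real) measure" and D :: "real measure"
  assumes N: "joint_with_marginals N D"
begin

lemma prob_space_joint: "prob_space N"
  using N by (simp add: joint_with_marginals_def)

lemma sets_joint: "sets N = sets borel"
  using N by (simp add: joint_with_marginals_def)

lemma space_joint: "space N = UNIV"
  using sets_eq_imp_space_eq[OF sets_joint] by simp

lemma measure_joint_fst:
  assumes "A \<in> sets borel"
  shows "measure N {p. fst p \<in> A} = measure uniform01 A"
proof -
  have "fst \<in> measurable N lborel"
    by (simp add: measurable_cong_sets[OF sets_joint refl] borel_measurable_continuous_onI
        continuous_on_fst continuous_on_id)
  then have "measure (distr N lborel fst) A = measure N {p. fst p \<in> A}"
    using assms by (subst measure_distr) (auto simp: vimage_def space_joint)
  then show ?thesis
    using N by (simp add: joint_with_marginals_def)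
qed

lemma measure_joint_snd:
  assumes "B \<in> sets borel"
  shows "measure N {p. snd p \<in> B} = measure D B"
proof -
  have "snd \<in> borel_measurable N"
    by (simp add: measurable_cong_sets[OF sets_joint refl] borel_measurable_continuous_onI
        continuous_on_snd continuous_on_id)
  then have "measure (distr N borel snd) B = measure N {p. snd p \<in> B}"
    using assms by (subst measure_distr) (auto simp: vimage_def space_joint)
  then show ?thesis
    using N by (simp add: joint_with_marginals_def)
qed

lemma real_distribution_marginal: "real_distribution D"
proof -
  interpret prob_space N by (rule prob_space_joint)
  have "snd \<in> borel_measurable N"
    by (simp add: measurable_cong_sets[OF sets_joint refl] borel_measurable_continuous_onI
        continuous_on_snd continuous_on_id)
  then show ?thesis
    using N by (auto simp: joint_with_marginals_def)
qed

lemma measure_joint_strip: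
  assumes "0 \<le> c" "c \<le> d" "d \<le> 1"
  shows "measure N {p. c < fst p \<and> fst p < d} = d - c"
proof -
  have "measure uniform01 {c<..<d} = d - c"
    by (rule measure_uniform01_between) (use assms in auto)
  then show ?thesis
    using measure_joint_fst[of "{c<..<d}"] by simp
qed

lemma sets_joint_Collect: "Measurable.pred (borel \<Otimes>\<^sub>M borel) P \<Longrightarrow> {p. P p} \<in> sets N"
  by (simp add: pred_def sets_joint borel_prod)

lemma sets_joint_strip: "{p. c < fst p \<and> fst p < d} \<in> sets N"
  by (intro sets_joint_Collect) measurable

lemma sets_joint_snd:
  "{p. snd p \<le> y} \<in> sets N" "{p. snd p < y} \<in> sets N" "{p. y \<le> snd p} \<in> sets N" "{p. y < snd p} \<in> sets N"
  by (intro sets_joint_Collect; measurable)+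

lemma sets_window_joint:
  assumes "mono_on {0<..<1} q" "0 \<le> a" "b \<le> 1"
  shows "window_lt q a b \<in> sets N" and "window_gt q a b \<in> sets N"
  using sets_window[OF assms] by (simp_all add: sets_joint)

lemma measure_joint_snd_le: "measure N {p. snd p \<le> y} = cdf D y"
  using measure_joint_snd[of "{..y}"] by (simp add: cdf_def)

lemma measure_joint_snd_less: "measure N {p. snd p < y} = measure D {..<y}"
  using measure_joint_snd[of "{..<y}"] by simp

lemma measure_joint_snd_gt: "measure N {p. y < snd p} = 1 - cdf D y"
proof -
  interpret prob_space N by (rule prob_space_joint)
  have "{p. y < snd p} = space N - {p. snd p \<le> y}"
    by (auto simp: space_joint)
  then show ?thesis
    using prob_compl[OF sets_joint_snd(1)] by (simp add: measure_joint_snd_le)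
qed

lemma measure_joint_snd_ge: "measure N {p. y \<le> snd p} = 1 - measure D {..<y}"
proof -
  interpret prob_space N by (rule prob_space_joint)
  have "{p. y \<le> snd p} = space N - {p. snd p < y}"
    by (auto simp: space_joint)
  then show ?thesis
    using prob_compl[OF sets_joint_snd(2)] by (simp add: measure_joint_snd_less)
qed

lemma measure_joint_strip_le:
  assumes "0 \<le> c" "c \<le> d" "d \<le> 1" "{p. c < fst p \<and> fst p < d} \<subseteq> E \<union> T"
    and "E \<in> sets N" "T \<in> sets N"
  shows "d - c \<le> measure N E + measure N T"
proof -
  interpret prob_space N by (rule prob_space_joint)
  have "d - c \<le> measure N (E \<union> T)"
    using assms finite_measure_mono[OF assms(4)] by (simp add: measure_joint_strip)
  also have "\<dots> \<le> measure N E + measure N T"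
    using assms(5,6) by (rule measure_Un_le)
  finally show ?thesis .
qed

lemma measure_joint_strip_Diff:
  assumes "0 \<le> a" "a \<le> b" "b \<le> 1" "W \<in> sets N" "W \<subseteq> {p. a < fst p \<and> fst p < b}"
  shows "measure N ({p. a < fst p \<and> fst p < b} - W) = b - a - measure N W"
proof -
  interpret prob_space N by (rule prob_space_joint)
  show ?thesis
    using assms sets_joint_strip by (simp add: finite_measure_Diff measure_joint_strip)
qed

lemma measure_window_lt_pointwise:
  assumes q: "mono_on {0<..<1} q" and x: "0 \<le> a" "a < x" "x < b" "b \<le> 1"
  shows "x - a - cdf D (q x) \<le> measure N (window_lt q a b)"
    and "b - x - 1 + cdf D (q x) \<le> b - a - measure N (window_lt q a b)"
proof -
  have W: "window_lt q a b \<in> sets N" "window_lt q a b \<subseteq> {p. a < fst p \<and> fst p < b}"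
    using sets_window_joint(1)[OF q x(1,4)] by (auto simp: window_lt_def)
  have "x - a \<le> measure N (window_lt q a b) + measure N {p. snd p \<le> q x}"
  proof (rule measure_joint_strip_le)
    show "{p. a < fst p \<and> fst p < x} \<subseteq> window_lt q a b \<union> {p. snd p \<le> q x}"
    proof
      fix p :: "real \<times> real" assume "p \<in> {p. a < fst p \<and> fst p < x}"
      moreover from this have "q (fst p) \<le> q x"
        using x by (intro mono_onD[OF q]) auto
      ultimately show "p \<in> window_lt q a b \<union> {p. snd p \<le> q x}"
        using x by (auto simp: window_lt_def)
    qed
  qed (use x W sets_joint_snd in auto)
  then show "x - a - cdf D (q x) \<le> measure N (window_lt q a b)"
    by (simp add: measure_joint_snd_le)
  have "b - x \<le> measure N ({p. a < fst p \<and> fst p < b} - window_lt q a b) + measure N {p. q x < snd p}"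
  proof (rule measure_joint_strip_le)
    show "{p. x < fst p \<and> fst p < b} \<subseteq> ({p. a < fst p \<and> fst p < b} - window_lt q a b) \<union> {p. q x < snd p}"
    proof
      fix p :: "real \<times> real" assume "p \<in> {p. x < fst p \<and> fst p < b}"
      moreover from this have "q x \<le> q (fst p)"
        using x by (intro mono_onD[OF q]) auto
      ultimately show "p \<in> ({p. a < fst p \<and> fst p < b} - window_lt q a b) \<union> {p. q x < snd p}"
        using x by (auto simp: window_lt_def)
    qed
  qed (use x W sets_joint_strip sets_joint_snd in auto)
  then show "b - x - 1 + cdf D (q x) \<le> b - a - measure N (window_lt q a b)"
    using x W by (simp add: measure_joint_strip_Diff measure_joint_snd_gt)
qed

lemma measure_window_gt_pointwise:
  assumes q: "mono_on {0<..<1} q" and x: "0 \<le> a" "a < x" "x < b" "b \<le> 1"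
  shows "b - x - 1 + measure D {..<q x} \<le> measure N (window_gt q a b)"
    and "x - a - measure D {..<q x} \<le> b - a - measure N (window_gt q a b)"
proof -
  have W: "window_gt q a b \<in> sets N" "window_gt q a b \<subseteq> {p. a < fst p \<and> fst p < b}"
    using sets_window_joint(2)[OF q x(1,4)] by (auto simp: window_gt_def)
  have "b - x \<le> measure N (window_gt q a b) + measure N {p. q x \<le> snd p}"
  proof (rule measure_joint_strip_le)
    show "{p. x < fst p \<and> fst p < b} \<subseteq> window_gt q a b \<union> {p. q x \<le> snd p}"
    proof
      fix p :: "real \<times> real" assume "p \<in> {p. x < fst p \<and> fst p < b}"
      moreover from this have "q x \<le> q (fst p)"
        using x by (intro mono_onD[OF q]) auto
      ultimately show "p \<in> window_gt q a b \<union> {p. q x \<le> snd p}"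
        using x by (auto simp: window_gt_def)
    qed
  qed (use x W sets_joint_snd in auto)
  then show "b - x - 1 + measure D {..<q x} \<le> measure N (window_gt q a b)"
    by (simp add: measure_joint_snd_ge)
  have "x - a \<le> measure N ({p. a < fst p \<and> fst p < b} - window_gt q a b) + measure N {p. snd p < q x}"
  proof (rule measure_joint_strip_le)
    show "{p. a < fst p \<and> fst p < x} \<subseteq> ({p. a < fst p \<and> fst p < b} - window_gt q a b) \<union> {p. snd p < q x}"
    proof
      fix p :: "real \<times> real" assume "p \<in> {p. a < fst p \<and> fst p < x}"
      moreover from this have "q (fst p) \<le> q x"
        using x by (intro mono_onD[OF q]) auto
      ultimately show "p \<in> ({p. a < fst p \<and> fst p < b} - window_gt q a b) \<union> {p. snd p < q x}"
        using x by (auto simp: window_gt_def)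
    qed
  qed (use x W sets_joint_strip sets_joint_snd in auto)
  then show "x - a - measure D {..<q x} \<le> b - a - measure N (window_gt q a b)"
    using x W by (simp add: measure_joint_strip_Diff measure_joint_snd_less)
qed

lemma measure_joint_le_strip:
  assumes "0 \<le> a" "a \<le> b" "b \<le> 1" "W \<in> sets N" "W \<subseteq> {p. a < fst p \<and> fst p < b}"
  shows "measure N W \<le> b - a"
  using measure_joint_strip_Diff[OF assms] measure_nonneg[of N] by (smt (verit))

lemma window_lt_bounds:
  assumes q: "mono_on {0<..<1} q" and ab: "0 \<le> a" "a < b" "b \<le> 1"
  shows "left_excess (\<lambda>x. cdf D (q x)) a b \<le> measure N (window_lt q a b)"
    and "measure N (window_lt q a b) \<le> b - a - right_excess (\<lambda>x. cdf D (q x)) a b"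
proof -
  show "left_excess (\<lambda>x. cdf D (q x)) a b \<le> measure N (window_lt q a b)"
    using measure_window_lt_pointwise(1)[OF q ab(1)] ab by (intro left_excess_least) auto
  have "right_excess (\<lambda>x. cdf D (q x)) a b \<le> b - a - measure N (window_lt q a b)"
    using measure_window_lt_pointwise(2)[OF q ab(1)] ab
      measure_joint_le_strip[OF ab(1) less_imp_le[OF ab(2)] ab(3) sets_window_joint(1)[OF q ab(1,3)]]
    by (intro right_excess_least) (auto simp: window_lt_def)
  then show "measure N (window_lt q a b) \<le> b - a - right_excess (\<lambda>x. cdf D (q x)) a b"
    by simp
qed

lemma window_gt_bounds:
  assumes q: "mono_on {0<..<1} q" and ab: "0 \<le> a" "a < b" "b \<le> 1"
  shows "right_excess (\<lambda>x. left_lim (cdf D) (q x)) a b \<le> measure N (window_gt q a b)"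
    and "measure N (window_gt q a b) \<le> b - a - left_excess (\<lambda>x. left_lim (cdf D) (q x)) a b"
proof -
  note left_lim = left_lim_cdf[OF real_distribution_marginal]
  show "right_excess (\<lambda>x. left_lim (cdf D) (q x)) a b \<le> measure N (window_gt q a b)"
    using measure_window_gt_pointwise(1)[OF q ab(1)] ab
    by (intro right_excess_least) (auto simp: left_lim)
  have "left_excess (\<lambda>x. left_lim (cdf D) (q x)) a b \<le> b - a - measure N (window_gt q a b)"
    using measure_window_gt_pointwise(2)[OF q ab(1)] ab
      measure_joint_le_strip[OF ab(1) less_imp_le[OF ab(2)] ab(3) sets_window_joint(2)[OF q ab(1,3)]]
    by (intro left_excess_least) (auto simp: left_lim window_gt_def)
  then show "measure N (window_gt q a b) \<le> b - a - left_excess (\<lambda>x. left_lim (cdf D) (q x)) a b"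
    by simp
qed

end

section \<open>Sharpness\<close>

definition rotation_coupling :: "(real \<Rightarrow> real) \<Rightarrow> real \<Rightarrow> (real \<times> real) measure" where
  "rotation_coupling Q t = distr uniform01 borel (\<lambda>u. (u, Q (rotate01 t u)))"

lemma rotation_coupling_windows:
  assumes Q: "Q \<in> borel_measurable borel" "distr uniform01 borel Q = D"
    and q: "mono_on {0<..<1} q" and ab: "0 \<le> a" "b \<le> 1" and t: "0 \<le> t" "t \<le> 1"
  defines "N \<equiv> rotation_coupling Q t"
  shows "joint_with_marginals N D"
    and "window_lt q a b \<in> sets N" and "window_gt q a b \<in> sets N"
    and "{u. a < u \<and> u < b \<and> q u < Q (rotate01 t u)} \<in> sets borel"
    and "{u. a < u \<and> u < b \<and> Q (rotate01 t u) < q u} \<in> sets borel"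
    and "measure N (window_lt q a b) = measure uniform01 {u. a < u \<and> u < b \<and> q u < Q (rotate01 t u)}"
    and "measure N (window_gt q a b) = measure uniform01 {u. a < u \<and> u < b \<and> Q (rotate01 t u) < q u}"
proof -
  interpret prob_space uniform01 by (rule prob_space_uniform01)
  have [measurable]: "Q \<in> borel_measurable borel"
    by (fact Q(1))
  have pair: "(\<lambda>u. (u, Q (rotate01 t u))) \<in> borel_measurable uniform01"
    by (simp cong: measurable_cong_sets)
  have "distr uniform01 borel (\<lambda>u. Q (rotate01 t u)) = distr (distr uniform01 borel (rotate01 t)) borel Q"
    by (subst distr_distr) (auto simp: comp_def cong: measurable_cong_sets)
  also have "\<dots> = D"
    using t Q(2) by (simp add: distr_uniform01_rotate01)
  finally have law: "distr uniform01 borel (\<lambda>u. Q (rotate01 t u)) = D" .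
  have "joint_with_marginals N (distr uniform01 borel (\<lambda>u. Q (rotate01 t u)))"
    unfolding N_def rotation_coupling_def
    by (intro joint_with_marginals_distr_pair prob_space_uniform01)
       (auto simp: distr_id2 cong: measurable_cong_sets)
  then show N: "joint_with_marginals N D"
    using law by simp
  note W = sets_window[OF q ab]
  then show "window_lt q a b \<in> sets N" "window_gt q a b \<in> sets N"
    by (simp_all add: sets_joint[OF N])
  have "(\<lambda>u. (u, Q (rotate01 t u))) -` window_lt q a b \<in> sets borel"
    "(\<lambda>u. (u, Q (rotate01 t u))) -` window_gt q a b \<in> sets borel"
    using measurable_sets[OF pair W(1)] measurable_sets[OF pair W(2)] by simp_all
  then show "{u. a < u \<and> u < b \<and> q u < Q (rotate01 t u)} \<in> sets borel"
    "{u. a < u \<and> u < b \<and> Q (rotate01 t u) < q u} \<in> sets borel"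
    by (simp_all add: vimage_def window_lt_def window_gt_def)
  show "measure N (window_lt q a b) = measure uniform01 {u. a < u \<and> u < b \<and> q u < Q (rotate01 t u)}"
    "measure N (window_gt q a b) = measure uniform01 {u. a < u \<and> u < b \<and> Q (rotate01 t u) < q u}"
    unfolding N_def rotation_coupling_def using W pair
    by (simp_all add: measure_distr vimage_def window_lt_def window_gt_def)
qed

context
  fixes D :: "real measure" and q :: "real \<Rightarrow> real" and a b :: real
  assumes D: "real_distribution D" and q: "mono_on {0<..<1} q" and ab: "0 \<le> a" "a < b" "b \<le> 1"
begin

lemma window_lt_lower_attained:
  "\<exists>N. joint_with_marginals N D \<and> window_lt q a b \<in> sets N \<and>
     measure N (window_lt q a b) = left_excess (\<lambda>x. cdf D (q x)) a b"
proof -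
  let ?G = "\<lambda>x. cdf D (q x)"
  define s where "s = left_excess ?G a b"
  have G: "unit_monotone ?G"
    using D q by (rule unit_monotone_cdf_comp)
  have s: "0 \<le> s" "s \<le> b - a"
    using left_excess_nonneg[OF G ab(2)] left_excess_le_diff[OF G ab(2)] by (simp_all add: s_def)
  have t: "0 \<le> a + s" "a + s \<le> 1"
    using s ab by auto
  note N = rotation_coupling_windows[OF real_distribution.borel_measurable_lquantile[OF D]
      real_distribution.distr_uniform01_lquantile[OF D] q ab(1,3) t]
  \<comment> \<open>the rotation moves \<open>(a + s, b)\<close> to levels \<open>v \<le> cdf D (q u)\<close>, where \<open>lquantile D v \<le> q u\<close>\<close>
  have "{u. a < u \<and> u < b \<and> q u < lquantile D (rotate01 (a + s) u)} \<subseteq> {a..a + s}"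
  proof (rule subsetI, rule ccontr)
    fix u assume u: "u \<in> {u. a < u \<and> u < b \<and> q u < lquantile D (rotate01 (a + s) u)}"
      and "u \<notin> {a..a + s}"
    then have "a + s < u"
      by auto
    then have "rotate01 (a + s) u = u - a - s" "u - a - s \<in> {0<..<1}"
      using u ab s by (auto simp: rotate01_def)
    moreover have "u - a - s \<le> ?G u"
      using left_excess_ge[OF G, of a u b] u by (simp add: s_def)
    ultimately have "lquantile D (rotate01 (a + s) u) \<le> q u"
      using real_distribution.lquantile_le_iff[OF D] by simp
    with u show False
      by simp
  qed
  then have "measure (rotation_coupling (lquantile D) (a + s)) (window_lt q a b) \<le> s"
    using measure_uniform01_le[of a "a + s"] s ab N(6) by simp
  moreover have "s \<le> measure (rotation_coupling (lquantile D) (a + s)) (window_lt q a b)"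
    using window_lt_bounds(1)[OF N(1) q ab] s ab by (simp add: s_def)
  ultimately show ?thesis
    using N(1,2) unfolding s_def[symmetric] by (intro exI[of _ "rotation_coupling (lquantile D) (a + s)"]) simp
qed

lemma window_gt_lower_attained:
  "\<exists>N. joint_with_marginals N D \<and> window_gt q a b \<in> sets N \<and>
     measure N (window_gt q a b) = right_excess (\<lambda>x. left_lim (cdf D) (q x)) a b"
proof -
  let ?G = "\<lambda>x. left_lim (cdf D) (q x)"
  define s where "s = right_excess ?G a b"
  have G: "unit_monotone ?G"
    using D q by (rule unit_monotone_left_lim_cdf_comp)
  have s: "0 \<le> s" "s \<le> b - a"
    using right_excess_nonneg[OF G ab(2)] right_excess_le_diff[OF G ab(2)] by (simp_all add: s_def)
  have t: "0 \<le> b - s" "b - s \<le> 1"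
    using s ab by auto
  note N = rotation_coupling_windows[OF real_distribution.borel_measurable_rquantile[OF D]
      real_distribution.distr_uniform01_rquantile[OF D] q ab(1,3) t]
  have "{u. a < u \<and> u < b \<and> rquantile D (rotate01 (b - s) u) < q u} \<subseteq> {b - s..b}"
  proof (rule subsetI, rule ccontr)
    fix u assume u: "u \<in> {u. a < u \<and> u < b \<and> rquantile D (rotate01 (b - s) u) < q u}"
      and "u \<notin> {b - s..b}"
    then have "u < b - s"
      by auto
    then have "rotate01 (b - s) u = u + 1 - b + s" "u + 1 - b + s \<in> {0<..<1}"
      using u ab s by (auto simp: rotate01_def)
    moreover have "measure D {..<q u} \<le> u + 1 - b + s"
      using right_excess_ge[OF G, of a u b] u by (simp add: s_def left_lim_cdf[OF D])
    ultimately have "\<not> rquantile D (rotate01 (b - s) u) < q u"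
      using real_distribution.rquantile_less_iff[OF D] by simp
    with u show False
      by simp
  qed
  then have "measure (rotation_coupling (rquantile D) (b - s)) (window_gt q a b) \<le> s"
    using measure_uniform01_le[of "b - s" b] s ab N(7) by simp
  moreover have "s \<le> measure (rotation_coupling (rquantile D) (b - s)) (window_gt q a b)"
    using window_gt_bounds(1)[OF N(1) q ab] by (simp add: s_def)
  ultimately show ?thesis
    using N(1,3) unfolding s_def[symmetric] by (intro exI[of _ "rotation_coupling (rquantile D) (b - s)"]) simp
qed

lemma window_lt_upper_approx:
  assumes "0 < \<epsilon>"
  shows "\<exists>N. joint_with_marginals N D \<and> window_lt q a b \<in> sets N \<and>
     \<bar>measure N (window_lt q a b) - (b - a - right_excess (\<lambda>x. cdf D (q x)) a b)\<bar> \<le> \<epsilon>"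
proof -
  let ?G = "\<lambda>x. cdf D (q x)"
  define s where "s = min (right_excess ?G a b + \<epsilon>) (b - a)"
  have G: "unit_monotone ?G"
    using D q by (rule unit_monotone_cdf_comp)
  have s: "0 \<le> s" "s \<le> b - a"
    using right_excess_nonneg[OF G ab(2)] assms ab by (auto simp: s_def)
  have t: "0 \<le> b - s" "b - s \<le> 1"
    using s ab by auto
  note N = rotation_coupling_windows[OF real_distribution.borel_measurable_lquantile[OF D]
      real_distribution.distr_uniform01_lquantile[OF D] q ab(1,3) t]
  have "{a<..<b - s} \<subseteq> {u. a < u \<and> u < b \<and> q u < lquantile D (rotate01 (b - s) u)}"
  proof
    fix u assume u: "u \<in> {a<..<b - s}"
    then have "rotate01 (b - s) u = u + 1 - b + s" "u + 1 - b + s \<in> {0<..<1}"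
      using ab s by (auto simp: rotate01_def)
    moreover have "b - u - 1 + ?G u < s"
    proof -
      have u': "a < u" "u < b"
        using u s by auto
      then show ?thesis
        using right_excess_ge[OF G u'] unit_monotoneD(2)[OF G, of u] assms by (auto simp: s_def)
    qed
    ultimately have "\<not> lquantile D (rotate01 (b - s) u) \<le> q u"
      using real_distribution.lquantile_le_iff[OF D] by simp
    with u s show "u \<in> {u. a < u \<and> u < b \<and> q u < lquantile D (rotate01 (b - s) u)}"
      by auto
  qed
  then have "b - s - a \<le> measure (rotation_coupling (lquantile D) (b - s)) (window_lt q a b)"
    using measure_uniform01_ge[of a "b - s"] s ab N(4,6) by simp
  moreover have "measure (rotation_coupling (lquantile D) (b - s)) (window_lt q a b) \<le> b - a - right_excess ?G a b"
    using window_lt_bounds(2)[OF N(1) q ab] .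
  moreover have "b - a - right_excess ?G a b - \<epsilon> \<le> b - s - a"
    by (simp add: s_def)
  ultimately show ?thesis
    using N(1,2) by (intro exI[of _ "rotation_coupling (lquantile D) (b - s)"]) auto
qed

lemma window_gt_upper_approx:
  assumes "0 < \<epsilon>"
  shows "\<exists>N. joint_with_marginals N D \<and> window_gt q a b \<in> sets N \<and>
     \<bar>measure N (window_gt q a b) - (b - a - left_excess (\<lambda>x. left_lim (cdf D) (q x)) a b)\<bar> \<le> \<epsilon>"
proof -
  let ?G = "\<lambda>x. left_lim (cdf D) (q x)"
  define s where "s = min (left_excess ?G a b + \<epsilon>) (b - a)"
  have G: "unit_monotone ?G"
    using D q by (rule unit_monotone_left_lim_cdf_comp)
  have s: "0 \<le> s" "s \<le> b - a"
    using left_excess_nonneg[OF G ab(2)] assms ab by (auto simp: s_def)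
  have t: "0 \<le> a + s" "a + s \<le> 1"
    using s ab by auto
  note N = rotation_coupling_windows[OF real_distribution.borel_measurable_rquantile[OF D]
      real_distribution.distr_uniform01_rquantile[OF D] q ab(1,3) t]
  have "{a + s<..<b} \<subseteq> {u. a < u \<and> u < b \<and> rquantile D (rotate01 (a + s) u) < q u}"
  proof
    fix u assume u: "u \<in> {a + s<..<b}"
    then have "rotate01 (a + s) u = u - a - s" "u - a - s \<in> {0<..<1}"
      using ab s by (auto simp: rotate01_def)
    moreover have "u - a - ?G u < s"
    proof -
      have u': "a < u" "u < b"
        using u s by auto
      then show ?thesis
        using left_excess_ge[OF G u'] unit_monotoneD(1)[OF G, of u] assms by (auto simp: s_def)
    qed
    ultimately have "rquantile D (rotate01 (a + s) u) < q u"
      using real_distribution.rquantile_less_iff[OF D] by (simp add: left_lim_cdf[OF D])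
    with u s show "u \<in> {u. a < u \<and> u < b \<and> rquantile D (rotate01 (a + s) u) < q u}"
      by auto
  qed
  then have "b - (a + s) \<le> measure (rotation_coupling (rquantile D) (a + s)) (window_gt q a b)"
    using measure_uniform01_ge[of "a + s" b] s ab N(5,7) by simp
  moreover have "measure (rotation_coupling (rquantile D) (a + s)) (window_gt q a b) \<le> b - a - left_excess ?G a b"
    using window_gt_bounds(2)[OF N(1) q ab] .
  moreover have "b - a - left_excess ?G a b - \<epsilon> \<le> b - (a + s)"
    by (simp add: s_def)
  ultimately show ?thesis
    using N(1,3) by (intro exI[of _ "rotation_coupling (rquantile D) (a + s)"]) auto
qed

end

theorem theoremA4:
  fixes M :: "'s measure" and Y0 Y1 U :: "'s \<Rightarrow> real"
  defines "F0 \<equiv> cdf (distr M borel Y0)"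
      and "F1 \<equiv> cdf (distr M borel Y1)"
  assumes "prob_space M"
      and "Y0 \<in> borel_measurable M" and "Y1 \<in> borel_measurable M" and "U \<in> borel_measurable M"
      and "distr M lborel U = uniform_measure lborel {0..1}"
      and "AE \<omega> in M. Y0 \<omega> = gen_inv F0 (U \<omega>)"
  shows
    "(\<forall>a b. 0 \<le> a \<and> a < b \<and> b \<le> 1 \<longrightarrow>
        lower_lt F0 F1 a b \<le> measure M {\<omega>\<in>space M. a < U \<omega> \<and> U \<omega> < b \<and> Y0 \<omega> < Y1 \<omega>} \<and>
        measure M {\<omega>\<in>space M. a < U \<omega> \<and> U \<omega> < b \<and> Y0 \<omega> < Y1 \<omega>} \<le> upper_lt F0 F1 a b \<and>
        lower_gt F0 F1 a b \<le> measure M {\<omega>\<in>space M. a < U \<omega> \<and> U \<omega> < b \<and> Y0 \<omega> > Y1 \<omega>} \<and>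
        measure M {\<omega>\<in>space M. a < U \<omega> \<and> U \<omega> < b \<and> Y0 \<omega> > Y1 \<omega>} \<le> upper_gt F0 F1 a b)
     \<and>
     (\<forall>a b. 0 \<le> a \<and> a < b \<and> b \<le> 1 \<longrightarrow>
        (\<exists>N. joint_with_marginals N (distr M borel Y1) \<and>
             {p. a < fst p \<and> fst p < b \<and> gen_inv F0 (fst p) < snd p} \<in> sets N \<and>
             measure N {p. a < fst p \<and> fst p < b \<and> gen_inv F0 (fst p) < snd p} = lower_lt F0 F1 a b) \<and>
        (\<exists>N. joint_with_marginals N (distr M borel Y1) \<and>
             {p. a < fst p \<and> fst p < b \<and> gen_inv F0 (fst p) > snd p} \<in> sets N \<and>
             measure N {p. a < fst p \<and> fst p < b \<and> gen_inv F0 (fst p) > snd p} = lower_gt F0 F1 a b) \<and>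
        (\<forall>\<epsilon>>0. \<exists>N. joint_with_marginals N (distr M borel Y1) \<and>
             {p. a < fst p \<and> fst p < b \<and> gen_inv F0 (fst p) < snd p} \<in> sets N \<and>
             \<bar>measure N {p. a < fst p \<and> fst p < b \<and> gen_inv F0 (fst p) < snd p} - upper_lt F0 F1 a b\<bar> \<le> \<epsilon>) \<and>
        (\<forall>\<epsilon>>0. \<exists>N. joint_with_marginals N (distr M borel Y1) \<and>
             {p. a < fst p \<and> fst p < b \<and> gen_inv F0 (fst p) > snd p} \<in> sets N \<and>
             \<bar>measure N {p. a < fst p \<and> fst p < b \<and> gen_inv F0 (fst p) > snd p} - upper_gt F0 F1 a b\<bar> \<le> \<epsilon>))
     \<and>
     mono_lipschitz_bound (lower_lt F0 F1) \<and> mono_lipschitz_bound (upper_lt F0 F1) \<and>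
     mono_lipschitz_bound (lower_gt F0 F1) \<and> mono_lipschitz_bound (upper_gt F0 F1)"
proof -
  interpret M: prob_space M by fact
  note [measurable] = \<open>Y0 \<in> borel_measurable M\<close> \<open>Y1 \<in> borel_measurable M\<close> \<open>U \<in> borel_measurable M\<close>
  define N where "N = distr M borel (\<lambda>\<omega>. (U \<omega>, Y1 \<omega>))"
  have D0: "real_distribution (distr M borel Y0)" and D1: "real_distribution (distr M borel Y1)"
    by simp_all
  have q: "mono_on {0<..<1} (gen_inv F0)"
    unfolding F0_def using D0 by (rule real_distribution.mono_on_gen_inv_cdf)
  have N: "joint_with_marginals N (distr M borel Y1)"
    unfolding N_def using \<open>prob_space M\<close> \<open>distr M lborel U = uniform01\<close>
    by (intro joint_with_marginals_distr_pair) auto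
  have G1: "unit_monotone (\<lambda>x. F1 (gen_inv F0 x))"
    unfolding F1_def using D1 q by (rule unit_monotone_cdf_comp)
  have G2: "unit_monotone (\<lambda>x. left_lim F1 (gen_inv F0 x))"
    unfolding F1_def using D1 q by (rule unit_monotone_left_lim_cdf_comp)
  note windows = measure_window_distr_pair[OF \<open>prob_space M\<close> \<open>U \<in> borel_measurable M\<close>
      \<open>Y1 \<in> borel_measurable M\<close> \<open>Y0 \<in> borel_measurable M\<close>
      \<open>AE \<omega> in M. Y0 \<omega> = gen_inv F0 (U \<omega>)\<close> q, folded N_def]
  note lipschitz = mono_lipschitz_bound_if_unit_slope[OF unit_slope_bound_left_excess[OF G1]]
    mono_lipschitz_bound_if_unit_slope[OF unit_slope_bound_complement[OF unit_slope_bound_right_excess[OF G1]]]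
    mono_lipschitz_bound_if_unit_slope[OF unit_slope_bound_right_excess[OF G2]]
    mono_lipschitz_bound_if_unit_slope[OF unit_slope_bound_complement[OF unit_slope_bound_left_excess[OF G2]]]
  show ?thesis
    unfolding lower_lt_eq_left_excess upper_lt_eq_right_excess lower_gt_eq_right_excess
      upper_gt_eq_left_excess
    apply (intro conjI)
    subgoal
      using window_lt_bounds[OF N q] window_gt_bounds[OF N q] windows by (simp add: F1_def)
    subgoal
      using window_lt_lower_attained[OF D1 q] window_gt_lower_attained[OF D1 q]
        window_lt_upper_approx[OF D1 q] window_gt_upper_approx[OF D1 q]
      unfolding window_lt_def window_gt_def F1_def by simp
    using lipschitz by simp_all
qed

end
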